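(* Let $\gamma,\varepsilon^*,C^*,\lambda_1,\lambda_2>0$, set $\check C_0=C^*+\varepsilon^*/2$ and $\tilde C_0=C^*+1$, and assume $\lambda_1h\le\Delta t\le\lambda_2h$. Let $\check\rho^n,\check\rho^{n+1},\rho^n,\rho^{n+1},\hat\rho^{n+\frac12}\in\mathcal C$ satisfy, pointwise and on all faces: (a) $\varepsilon^*\le\check\rho^k\le C^*$ and $\|\nabla_h\check\rho^k\|_\infty\le C^*$ for $k=n,n+1$; $\|\check\rho^{n+1}-\check\rho^n\|_\infty\le C^*\Delta t$, $\|\nabla_h(\check\rho^{n+1}-\check\rho^n)\|_\infty\le C^*\Delta t$; (b) $\varepsilon^*/2\le\rho^{n+1}\le\check C_0$, $\rho^n>0$, $\|\nabla_h\rho^k\|_\infty\le\tilde C_0$ for $k=n,n+1$, and $\|\rho^{n+1}-\rho^n\|_\infty\le\tilde C_0\Delta t$; (c) $\varepsilon^*/2\le\hat\rho^{n+\frac12}\le\check C_0$ and $\frac34\le\hat\rho^{n+\frac12}/\rho^{n+1}\le\frac54$. Let $\tilde\rho^k=\check\rho^k-\rho^k$ and $\tilde S^{n+\frac12}=\check S^{n+\frac12}-S^{n+\frac12}$ with $$\check S^{n+\frac12}=\ln\check\rho^{n+1}-\frac{\check\rho^{n+1}-\check\rho^n}{2\check\rho^{n+1}}-\frac{(\check\rho^{n+1}-\check\rho^n)^2}{6(\check\rho^{n+1})^2},\quad S^{n+\frac12}=\ln\rho^{n+1}-\frac{\rho^{n+1}-\rho^n}{2\rho^{n+1}}-\frac{(\rho^{n+1}-\rho^n)^2}{6(\rho^{n+1})^2}.$$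 Then there exist positive constants $\tilde C_1,M_1$ depending only on $\varepsilon^*,C^*,\gamma,\lambda_1,\lambda_2$ (and $|\Omega|$) such that, for $h$ sufficiently small, $$\gamma\big[\hat\rho^{n+\frac12}\nabla_h\tilde S^{n+\frac12},\nabla_h(\tilde\rho^{n+1}+\tilde\rho^n)\big]\ge\frac\gamma4\|\nabla_h(\tilde\rho^{n+1}+\tilde\rho^n)\|_2^2-\tilde C_1\big(\|\tilde\rho^{n+1}\|_2^2+\|\tilde\rho^n\|_2^2\big)-M_1h^8.$$
   Context: Grid setting: $\Omega=(a,b)^3$, $N\in\mathbb N$, $h=(b-a)/N$, cell centers $(a+(i-\tfrac12)h,a+(j-\tfrac12)h,a+(k-\tfrac12)h)$, $1\le i,j,k\le N$. $\mathcal C$ is the space of cell-centered grid functions extended to ghost points by the discrete homogeneous Neumann condition $u_{0,j,k}=u_{1,j,k}$, $u_{N+1,j,k}=u_{N,j,k}$ (likewise in $j,k$). $D_xf_{i+1/2,j,k}=(f_{i+1,j,k}-f_{i,j,k})/h$, $A_xf_{i+1/2,j,k}=(f_{i+1,j,k}+f_{i,j,k})/2$; for face-centered $g$, $a_xg_{i,j,k}=(g_{i+1/2,j,k}+g_{i-1/2,j,k})/2$; analogously in $y,z$; $\nabla_hf=(D_xf,D_yf,D_zf)$. $\langle f,g\rangle=h^3\sum_{i,j,k=1}^Nf_{i,j,k}g_{i,j,k}$, $\|f\|_2^2=\langle f,f\rangle$, $\|f\|_\infty=\max|f_{i,j,k}|$, $\|\nabla_hf\|_\infty$ is the maximum of $|D_xf|,|D_yf|,|D_zf|$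 over all faces. For face-centered vector fields $[\vec f,\vec g]=\langle a_x(f^xg^x)+a_y(f^yg^y)+a_z(f^zg^z),1\rangle$, $\|\nabla_hf\|_2^2=[\nabla_hf,\nabla_hf]$, and for cell-centered $\mathcal D$, $[\mathcal D\nabla_hf,\nabla_hg]:=[(A_x\mathcal D\,D_xf,A_y\mathcal D\,D_yf,A_z\mathcal D\,D_zf),\nabla_hg]$. Nonlinear functions are applied pointwise. *)

theory Defs
  imports Complex_Main
begin

text \<open>Cell (i,j,k), 1 <= i,j,k <= N,
  stores the value at the cell centre. Indices outside 1..N are mapped back by clamping,
  which realises the discrete homogeneous Neumann extension to ghost points.\<close>

type_synonym grid = "nat \<Rightarrow> nat \<Rightarrow> nat \<Rightarrow> real"

text \<open>Face-centered vector fields: the x-component at index (i,j,k) is the value on the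
  face (i+1/2, j, k), i = 0..N; analogously for y and z.\<close>
type_synonym fgrid = "grid \<times> grid \<times> grid"

definition cl :: "nat \<Rightarrow> nat \<Rightarrow> nat" where
  "cl N i = max 1 (min N i)"

definition ext :: "nat \<Rightarrow> grid \<Rightarrow> grid" where
  "ext N f i j k = f (cl N i) (cl N j) (cl N k)"

definition Dx :: "real \<Rightarrow> nat \<Rightarrow> grid \<Rightarrow> grid" where
  "Dx h N f i j k = (ext N f (Suc i) j k - ext N f i j k) / h"
definition Dy :: "real \<Rightarrow> nat \<Rightarrow> grid \<Rightarrow> grid" where
  "Dy h N f i j k = (ext N f i (Suc j) k - ext N f i j k) / h"
definition Dz :: "real \<Rightarrow> nat \<Rightarrow> grid \<Rightarrow> grid" where
  "Dz h N f i j k = (ext N f i j (Suc k) - ext N f i j k) / h"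

definition Ax :: "nat \<Rightarrow> grid \<Rightarrow> grid" where
  "Ax N f i j k = (ext N f (Suc i) j k + ext N f i j k) / 2"
definition Ay :: "nat \<Rightarrow> grid \<Rightarrow> grid" where
  "Ay N f i j k = (ext N f i (Suc j) k + ext N f i j k) / 2"
definition Az :: "nat \<Rightarrow> grid \<Rightarrow> grid" where
  "Az N f i j k = (ext N f i j (Suc k) + ext N f i j k) / 2"

definition grad :: "real \<Rightarrow> nat \<Rightarrow> grid \<Rightarrow> fgrid" where
  "grad h N f = (Dx h N f, Dy h N f, Dz h N f)"

definition dgrad :: "real \<Rightarrow> nat \<Rightarrow> grid \<Rightarrow> grid \<Rightarrow> fgrid" where
  "dgrad h N D f = ((\<lambda>i j k. Ax N D i j k * Dx h N f i j k),
                    (\<lambda>i j k. Ay N D i j k * Dy h N f i j k),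
                    (\<lambda>i j k. Az N D i j k * Dz h N f i j k))"

definition ip :: "real \<Rightarrow> nat \<Rightarrow> grid \<Rightarrow> grid \<Rightarrow> real" where
  "ip h N f g = h^3 * (\<Sum>i\<in>{1..N}. \<Sum>j\<in>{1..N}. \<Sum>k\<in>{1..N}. f i j k * g i j k)"

definition l2sq :: "real \<Rightarrow> nat \<Rightarrow> grid \<Rightarrow> real" where
  "l2sq h N f = ip h N f f"

text \<open>face inner product \<open>[F,G] = \<langle>a_x(F^x G^x)+a_y(F^y G^y)+a_z(F^z G^z),1\<rangle>\<close>;
  the face (i-1/2) has index i-1.\<close>
definition brk :: "real \<Rightarrow> nat \<Rightarrow> fgrid \<Rightarrow> fgrid \<Rightarrow> real" where
  "brk h N F G = (case F of (Fx, Fy, Fz) \<Rightarrow> case G of (Gx, Gy, Gz) \<Rightarrow>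
     ip h N (\<lambda>i j k.
        (Fx i j k * Gx i j k + Fx (i - 1) j k * Gx (i - 1) j k) / 2
      + (Fy i j k * Gy i j k + Fy i (j - 1) k * Gy i (j - 1) k) / 2
      + (Fz i j k * Gz i j k + Fz i j (k - 1) * Gz i j (k - 1)) / 2) (\<lambda>i j k. 1))"

definition gnorm2 :: "real \<Rightarrow> nat \<Rightarrow> grid \<Rightarrow> real" where
  "gnorm2 h N f = brk h N (grad h N f) (grad h N f)"

definition on_cells :: "nat \<Rightarrow> (nat \<Rightarrow> nat \<Rightarrow> nat \<Rightarrow> bool) \<Rightarrow> bool" where
  "on_cells N P = (\<forall>i\<in>{1..N}. \<forall>j\<in>{1..N}. \<forall>k\<in>{1..N}. P i j k)"

definition sup_le :: "nat \<Rightarrow> grid \<Rightarrow> real \<Rightarrow> bool" where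
  "sup_le N f c = on_cells N (\<lambda>i j k. \<bar>f i j k\<bar> \<le> c)"

text \<open>\<open>\<parallel>\<nabla>_h f\<parallel>_\<infinity> \<le> c\<close>, maximum over all faces (face index 0..N in the normal direction)\<close>
definition grad_sup_le :: "real \<Rightarrow> nat \<Rightarrow> grid \<Rightarrow> real \<Rightarrow> bool" where
  "grad_sup_le h N f c = (\<forall>i\<in>{0..N}. \<forall>j\<in>{1..N}. \<forall>k\<in>{1..N}.
      \<bar>Dx h N f i j k\<bar> \<le> c \<and> \<bar>Dy h N f j i k\<bar> \<le> c \<and> \<bar>Dz h N f j k i\<bar> \<le> c)"

definition Sfun :: "grid \<Rightarrow> grid \<Rightarrow> grid" where
  "Sfun r1 r0 i j k = ln (r1 i j k) - (r1 i j k - r0 i j k) / (2 * r1 i j k)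
      - (r1 i j k - r0 i j k)^2 / (6 * (r1 i j k)^2)"

end

theory Submission
  imports Defs
begin

text \<open>
  Everything happens across a single face. Write \<open>x, y, X, Y, q\<close> for the values of
  \<open>rc1, rc0, r1, r0, rh\<close> at the two cells adjacent to the face and \<open>\<sigma> = (x - X) + (y - Y)\<close>.
  The mean value theorem along the segment joining the data of the two cells shows that the jump
  of \<open>S(x, y) - S(X, Y)\<close> is the jump of \<open>\<sigma>\<close> divided by \<open>2 x\<close> (at an intermediate point),
  up to an error of size \<open>h\<close> times the local size \<open>E\<close> of \<open>x - X\<close> and \<open>y - Y\<close>.
  If \<open>E < \<epsilon>/20\<close>, then \<open>q \<ge> 3X/4\<close> makes the coefficient \<open>q / (2 x)\<close> at least \<open>5/16 > 1/4\<close>,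
  and completing the square in the face term \<open>q \<cdot> jump S \<cdot> jump \<sigma> - (jump \<sigma>)\<^sup>2 / 4\<close> leaves
  \<open>-K h\<^sup>2 E\<^sup>2\<close>. If \<open>E \<ge> \<epsilon>/20\<close>, all jumps are \<open>O(h)\<close> and \<open>h\<^sup>2 \<le> (20/\<epsilon>)\<^sup>2 h\<^sup>2 E\<^sup>2\<close> gives the
  same bound. Summing over faces, every cell is counted by at most 18 face terms; no \<open>h\<^sup>8\<close>
  remainder is needed.
\<close>

section \<open>Elementary inequalities\<close>

lemma interpolation_le_max:
  fixes p q t :: real
  assumes "0 \<le> t" "t \<le> 1"
  shows "min p q \<le> p + t * (q - p)" "p + t * (q - p) \<le> max p q"
proof -
  have split: "p + t * (q - p) = (1 - t) * p + t * q" "m = (1 - t) * m + t * m" for m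
    by (simp_all add: algebra_simps)
  have "(1 - t) * min p q \<le> (1 - t) * p" "t * min p q \<le> t * q"
    "(1 - t) * p \<le> (1 - t) * max p q" "t * q \<le> t * max p q"
    using assms by (simp_all add: mult_left_mono)
  then show "min p q \<le> p + t * (q - p)" "p + t * (q - p) \<le> max p q"
    using split(1) split(2)[of "min p q"] split(2)[of "max p q"] by linarith+
qed

lemma abs_interpolation_le:
  fixes p q t B :: real
  assumes "0 \<le> t" "t \<le> 1" "\<bar>p\<bar> \<le> B" "\<bar>q\<bar> \<le> B"
  shows "\<bar>p + t * (q - p)\<bar> \<le> B"
  using interpolation_le_max[OF assms(1,2), of p q] assms(3,4)
  unfolding abs_le_iff min_def max_def by (auto split: if_splits)

lemma abs_mult_le_mult:
  fixes u v A B :: real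
  assumes "\<bar>u\<bar> \<le> A" "\<bar>v\<bar> \<le> B"
  shows "\<bar>u * v\<bar> \<le> A * B"
  using assms unfolding abs_mult by (intro mult_mono) auto

lemma abs_mult_diff_le:
  fixes p q P Q :: real
  shows "\<bar>p * q - P * Q\<bar> \<le> \<bar>p - P\<bar> * \<bar>q\<bar> + \<bar>P\<bar> * \<bar>q - Q\<bar>"
proof -
  have "p * q - P * Q = (p - P) * q + P * (q - Q)" by (simp add: algebra_simps)
  then show ?thesis by (metis abs_mult abs_triangle_ineq)
qed

lemma abs_square_cube_diff_le:
  fixes u U a :: real
  assumes "\<bar>u\<bar> \<le> a" "\<bar>U\<bar> \<le> a"
  shows "\<bar>u^2 - U^2\<bar> \<le> 2 * a * \<bar>u - U\<bar>" "\<bar>u^3 - U^3\<bar> \<le> 3 * a^2 * \<bar>u - U\<bar>"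
proof -
  have "\<bar>u + U\<bar> \<le> 2 * a" using assms by linarith
  moreover have "u^2 - U^2 = (u + U) * (u - U)" by (simp add: power2_eq_square algebra_simps)
  ultimately show "\<bar>u^2 - U^2\<bar> \<le> 2 * a * \<bar>u - U\<bar>"
    by (simp add: abs_mult mult_right_mono)
  have "0 \<le> a" using assms(1) by linarith
  then have "\<bar>u * U\<bar> \<le> a^2" "\<bar>u^2\<bar> \<le> a^2" "\<bar>U^2\<bar> \<le> a^2"
    using mult_mono[OF assms] power_mono[OF assms(1), of 2] power_mono[OF assms(2), of 2]
    by (auto simp: abs_mult power2_eq_square)
  then have "\<bar>u^2 + u * U + U^2\<bar> \<le> 3 * a^2"
    by (simp only: abs_le_iff) (intro conjI; elim conjE; linarith)
  moreover have "u^3 - U^3 = (u^2 + u * U + U^2) * (u - U)"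
    by (simp add: algebra_simps power2_eq_square power3_eq_cube)
  ultimately show "\<bar>u^3 - U^3\<bar> \<le> 3 * a^2 * \<bar>u - U\<bar>"
    by (simp add: abs_mult mult_right_mono)
qed

lemma quadratic_lower_bound:
  fixes a b s w :: real
  assumes "1/16 \<le> a" "\<bar>b\<bar> \<le> w"
  shows "- 4 * w^2 \<le> a * s^2 + b * s"
proof -
  have "s^2 / 16 \<le> a * s^2" using mult_right_mono[OF assms(1) zero_le_power2[of s]] by simp
  moreover have "- (w * \<bar>s\<bar>) \<le> b * s"
  proof -
    have "\<bar>b * s\<bar> \<le> w * \<bar>s\<bar>"
      using mult_right_mono[OF assms(2) abs_ge_zero[of s]] by (simp add: abs_mult)
    then show ?thesis by linarith
  qed
  moreover have "- 4 * w^2 \<le> s^2 / 16 - w * \<bar>s\<bar>"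
  proof -
    have "0 \<le> (\<bar>s\<bar> / 4 - 2 * w)^2" by simp
    then show ?thesis by (simp add: power2_eq_square algebra_simps)
  qed
  ultimately show ?thesis by linarith
qed

lemma sum_abs_sq_le:
  fixes a b c d :: real
  shows "(\<bar>a\<bar> + \<bar>b\<bar> + \<bar>c\<bar> + \<bar>d\<bar>)^2 \<le> 4 * (a^2 + b^2 + c^2 + d^2)"
proof -
  have "0 \<le> (\<bar>a\<bar>-\<bar>b\<bar>)^2 + (\<bar>a\<bar>-\<bar>c\<bar>)^2 + (\<bar>a\<bar>-\<bar>d\<bar>)^2 + (\<bar>b\<bar>-\<bar>c\<bar>)^2 + (\<bar>b\<bar>-\<bar>d\<bar>)^2 + (\<bar>c\<bar>-\<bar>d\<bar>)^2"
    by simp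
  then show ?thesis by (simp add: power2_eq_square algebra_simps)
qed

section \<open>The function \<open>S\<close> and its partial derivatives\<close>

definition S_pt :: "real \<Rightarrow> real \<Rightarrow> real" where
  "S_pt x y = ln x - (x - y) / (2 * x) - (x - y)^2 / (6 * x^2)"

text \<open>Partial derivatives of \<open>S_pt\<close> at \<open>(x, y)\<close>, written in terms of \<open>x\<close> and \<open>d = x - y\<close>.\<close>

definition S_dx :: "real \<Rightarrow> real \<Rightarrow> real" where
  "S_dx x d = 1 / (2 * x) + d / (6 * x^2) + d^2 / (3 * x^3)"

definition S_dy :: "real \<Rightarrow> real \<Rightarrow> real" where
  "S_dy x d = 1 / (2 * x) + d / (3 * x^2)"

lemma S_pt_has_derivative_along_line:
  fixes x y a b t :: real
  assumes "0 < x + t * a"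
  shows "((\<lambda>t. S_pt (x + t * a) (y + t * b)) has_real_derivative
      S_dx (x + t * a) (x + t * a - (y + t * b)) * a
    + S_dy (x + t * a) (x + t * a - (y + t * b)) * b) (at t)"
proof -
  have "p \<noteq> 0 \<Longrightarrow> a / p - ((a - b) * (2 * p) - d * (a * 2)) / (2 * p * (2 * p))
      - (12 * ((a - b) * (d * p^2)) - d^2 * (12 * (a * p))) / (36 * p ^ 4)
      = S_dx p d * a + S_dy p d * b" for p d :: real
    by (simp add: S_dx_def S_dy_def field_simps power2_eq_square power3_eq_cube power4_eq_xxxx)
  from this[of "x + t * a" "x + t * a - (y + t * b)"] show ?thesis
    unfolding S_pt_def using assms
    by (auto intro!: derivative_eq_intros simp: distrib_left)
qed

lemma S_pt_increment_mean_value: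
  fixes x1 x2 y1 y2 X1 X2 Y1 Y2 :: real
  assumes "0 < x1" "0 < x2" "0 < X1" "0 < X2"
  obtains \<xi> where "0 \<le> \<xi>" "\<xi> \<le> 1"
    "(S_pt x2 y2 - S_pt X2 Y2) - (S_pt x1 y1 - S_pt X1 Y1) =
       S_dx (x1 + \<xi> * (x2 - x1)) (x1 + \<xi> * (x2 - x1) - (y1 + \<xi> * (y2 - y1))) * (x2 - x1)
     + S_dy (x1 + \<xi> * (x2 - x1)) (x1 + \<xi> * (x2 - x1) - (y1 + \<xi> * (y2 - y1))) * (y2 - y1)
     - S_dx (X1 + \<xi> * (X2 - X1)) (X1 + \<xi> * (X2 - X1) - (Y1 + \<xi> * (Y2 - Y1))) * (X2 - X1)
     - S_dy (X1 + \<xi> * (X2 - X1)) (X1 + \<xi> * (X2 - X1) - (Y1 + \<xi> * (Y2 - Y1))) * (Y2 - Y1)"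
proof -
  define \<phi> where "\<phi> t = S_pt (x1 + t * (x2 - x1)) (y1 + t * (y2 - y1))
    - S_pt (X1 + t * (X2 - X1)) (Y1 + t * (Y2 - Y1))" for t
  define \<phi>' where "\<phi>' t =
       S_dx (x1 + t * (x2 - x1)) (x1 + t * (x2 - x1) - (y1 + t * (y2 - y1))) * (x2 - x1)
     + S_dy (x1 + t * (x2 - x1)) (x1 + t * (x2 - x1) - (y1 + t * (y2 - y1))) * (y2 - y1)
     - (S_dx (X1 + t * (X2 - X1)) (X1 + t * (X2 - X1) - (Y1 + t * (Y2 - Y1))) * (X2 - X1)
     + S_dy (X1 + t * (X2 - X1)) (X1 + t * (X2 - X1) - (Y1 + t * (Y2 - Y1))) * (Y2 - Y1))" for t
  have pos: "0 < p + t * (q - p)" if "0 < p" "0 < q" "0 \<le> t" "t \<le> 1" for p q t :: real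
    using interpolation_le_max(1)[OF that(3,4), of p q] that(1,2) by linarith
  have "(\<phi> has_real_derivative \<phi>' t) (at t)" if "0 \<le> t" "t \<le> 1" for t
    unfolding \<phi>_def[abs_def] \<phi>'_def
    using assms pos that by (intro DERIV_diff S_pt_has_derivative_along_line) auto
  then obtain \<xi> where "0 < \<xi>" "\<xi> < 1" "\<phi> 1 - \<phi> 0 = (1 - 0) * \<phi>' \<xi>"
    using MVT2[of 0 1 \<phi> \<phi>'] by auto
  moreover have "\<phi> 1 - \<phi> 0 = (S_pt x2 y2 - S_pt X2 Y2) - (S_pt x1 y1 - S_pt X1 Y1)"
    by (simp add: \<phi>_def)
  ultimately show ?thesis
    by (intro that[of \<xi>]) (simp_all only: \<phi>'_def diff_diff_eq less_le mult_1 diff_zero)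
qed

lemma abs_inverse_diff_le:
  fixes x X a :: real
  assumes "0 < x" "0 < X" "1/x \<le> a" "1/X \<le> a"
  shows "\<bar>1/x - 1/X\<bar> \<le> a^2 * \<bar>x - X\<bar>"
proof -
  define w where "w = (1/x) * (1/X)"
  have "1/x - 1/X = w * (X - x)" using assms by (simp add: w_def field_simps)
  moreover have "0 \<le> w" "w \<le> a^2"
    using mult_mono[OF assms(3,4)] assms by (simp_all add: w_def power2_eq_square)
  ultimately show ?thesis by (simp add: abs_mult abs_minus_commute mult_right_mono)
qed

lemma S_dx_inverse_form: "x \<noteq> 0 \<Longrightarrow> S_dx x d = (1/x) / 2 + d * (1/x)^2 / 6 + d^2 * (1/x)^3 / 3"
  by (simp add: S_dx_def power_one_over)

lemma S_dy_inverse_form: "x \<noteq> 0 \<Longrightarrow> S_dy x d = (1/x) / 2 + d * (1/x)^2 / 3"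
  by (simp add: S_dy_def power_one_over)

definition deriv_bound :: "real \<Rightarrow> real \<Rightarrow> real" where
  "deriv_bound a M = a + M * a^2 + M^2 * a^3"

definition deriv_lip :: "real \<Rightarrow> real \<Rightarrow> real" where
  "deriv_lip a M = a^2 + M * a^3 + M^2 * a^4"

lemma S_dx_S_dy_bounds:
  fixes a M x d :: real
  assumes x: "0 < x" "1/x \<le> a" and d: "\<bar>d\<bar> \<le> M"
  shows "\<bar>S_dx x d\<bar> \<le> deriv_bound a M" "\<bar>S_dy x d\<bar> \<le> deriv_bound a M"
    "\<bar>S_dx x d - 1/(2*x)\<bar> \<le> \<bar>d\<bar> * (a^2 + M * a^3)"
    "\<bar>S_dy x d - 1/(2*x)\<bar> \<le> \<bar>d\<bar> * (a^2 + M * a^3)"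
proof -
  define u where "u = 1/x"
  have u: "0 < u" "u \<le> a" using x by (simp_all add: u_def)
  have M: "0 \<le> M" using d by linarith
  have "u^2 \<le> a^2" "u^3 \<le> a^3" using u by (simp_all add: power_mono)
  then have du2: "\<bar>d * u^2\<bar> \<le> \<bar>d\<bar> * a^2" and ddu3: "\<bar>d^2 * u^3\<bar> \<le> \<bar>d\<bar> * (M * a^3)"
    using u(1) mult_mono[OF d \<open>u^3 \<le> a^3\<close>] M
    by (auto simp: abs_mult power2_eq_square mult.assoc intro!: mult_left_mono)
  have "0 \<le> a^2" "0 \<le> M * a^3" using M u by simp_all
  then have k: "\<bar>d\<bar> * a^2 \<le> M * a^2" "\<bar>d\<bar> * (M * a^3) \<le> M^2 * a^3"
    using mult_right_mono[OF d] by (simp_all add: power2_eq_square mult.assoc)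
  have nn: "0 \<le> \<bar>d\<bar> * a^2" "0 \<le> \<bar>d\<bar> * (M * a^3)" using M u by simp_all
  have dx: "S_dx x d = u/2 + d * u^2 / 6 + d^2 * u^3 / 3" and dy: "S_dy x d = u/2 + d * u^2 / 3"
    using S_dx_inverse_form S_dy_inverse_form x by (simp_all add: u_def)
  have half: "1/(2*x) = u/2" by (simp add: u_def)
  show "\<bar>S_dx x d\<bar> \<le> deriv_bound a M" "\<bar>S_dy x d\<bar> \<le> deriv_bound a M"
    unfolding dx dy deriv_bound_def using u du2 ddu3 k nn
    by (simp_all only: abs_le_iff, linarith+)
  show "\<bar>S_dx x d - 1/(2*x)\<bar> \<le> \<bar>d\<bar> * (a^2 + M * a^3)"
    "\<bar>S_dy x d - 1/(2*x)\<bar> \<le> \<bar>d\<bar> * (a^2 + M * a^3)"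
    unfolding dx dy half distrib_left using du2 ddu3 nn
    by (simp_all only: abs_le_iff, linarith+)
qed

lemma S_dx_S_dy_lipschitz:
  fixes a M E x X d D :: real
  assumes x: "0 < x" "0 < X" "1/x \<le> a" "1/X \<le> a" and d: "\<bar>d\<bar> \<le> M" "\<bar>D\<bar> \<le> M"
    and E: "\<bar>x - X\<bar> \<le> E" "\<bar>d - D\<bar> \<le> E"
  shows "\<bar>S_dx x d - S_dx X D\<bar> \<le> deriv_lip a M * E" "\<bar>S_dy x d - S_dy X D\<bar> \<le> deriv_lip a M * E"
proof -
  define u U where "u = 1/x" and "U = 1/X"
  have u: "\<bar>u\<bar> \<le> a" "\<bar>U\<bar> \<le> a" using x by (simp_all add: u_def U_def)
  have a: "0 \<le> a" and M: "0 \<le> M" and E0: "0 \<le> E" using u d E by linarith+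
  have "\<bar>u - U\<bar> \<le> a^2 * E"
    using abs_inverse_diff_le[OF x] mult_left_mono[OF E(1), of "a^2"] unfolding u_def U_def by simp
  note uU = this abs_square_cube_diff_le[OF u]
  have u23: "\<bar>u^2\<bar> \<le> a^2" "\<bar>u^3\<bar> \<le> a^3" "\<bar>D^2\<bar> \<le> M^2"
    using power_mono[OF u(1), of 2] power_mono[OF u(1), of 3] power_mono[OF d(2), of 2]
    by (simp_all add: power_abs)
  have t1: "\<bar>d * u^2 - D * U^2\<bar> \<le> E * a^2 + M * (2 * a * (a^2 * E))"
    using abs_mult_diff_le[of d "u^2" D "U^2"] mult_mono[OF E(2) u23(1)] d(2) uU(1,2) a M E0
    by (smt (verit, best) mult_mono abs_ge_zero mult_nonneg_nonneg)
  have t2: "\<bar>d^2 * u^3 - D^2 * U^3\<bar> \<le> (2 * M * E) * a^3 + M^2 * (3 * a^2 * (a^2 * E))"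
  proof -
    have "\<bar>d^2 - D^2\<bar> \<le> 2 * M * E"
      using abs_square_cube_diff_le(1)[OF d] mult_left_mono[OF E(2), of "2 * M"] M by linarith
    then show ?thesis
      using abs_mult_diff_le[of "d^2" "u^3" "D^2" "U^3"] u23 uU(1,3) a M E0
      by (smt (verit, best) mult_mono abs_ge_zero mult_nonneg_nonneg zero_le_power)
  qed
  have dx: "S_dx x d - S_dx X D = (u - U)/2 + (d * u^2 - D * U^2)/6 + (d^2 * u^3 - D^2 * U^3)/3"
    and dy: "S_dy x d - S_dy X D = (u - U)/2 + (d * u^2 - D * U^2)/3"
    using S_dx_inverse_form S_dy_inverse_form x(1,2) by (simp_all add: u_def U_def diff_divide_distrib)
  have sum: "\<bar>p/2 + q/6 + r/3\<bar> \<le> A1 + A2 + A3" "\<bar>p/2 + q/3\<bar> \<le> A1 + A2 + A3"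
    if "\<bar>p\<bar> \<le> A1" "\<bar>q\<bar> \<le> A1 + 2 * A2" "\<bar>r\<bar> \<le> 2 * A2 + 3 * A3" "0 \<le> A1" "0 \<le> A2" "0 \<le> A3"
    for p q r A1 A2 A3 :: real
    using that by (simp_all only: abs_le_iff, linarith+)
  have e: "E * a^2 + M * (2 * a * (a^2 * E)) = a^2 * E + 2 * (M * a^3 * E)"
    "(2 * M * E) * a^3 + M^2 * (3 * a^2 * (a^2 * E)) = 2 * (M * a^3 * E) + 3 * (M^2 * a^4 * E)"
    and lip: "deriv_lip a M * E = a^2 * E + M * a^3 * E + M^2 * a^4 * E"
    by (simp_all add: deriv_lip_def algebra_simps power2_eq_square power3_eq_cube power4_eq_xxxx)
  have nn: "0 \<le> a^2 * E" "0 \<le> M * a^3 * E" "0 \<le> M^2 * a^4 * E" using a M E0 by simp_all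
  show "\<bar>S_dx x d - S_dx X D\<bar> \<le> deriv_lip a M * E" "\<bar>S_dy x d - S_dy X D\<bar> \<le> deriv_lip a M * E"
    unfolding dx dy lip using sum[OF uU(1) t1[unfolded e(1)] t2[unfolded e(2)] nn] by simp_all
qed

section \<open>The estimate across one face\<close>

definition lin_const :: "real \<Rightarrow> real \<Rightarrow> real \<Rightarrow> real" where
  "lin_const \<epsilon> M G = 2 * M * ((2/\<epsilon>)^2 + M * (2/\<epsilon>)^3) + 2 * deriv_lip (2/\<epsilon>) M * G"

definition small_error_const :: "real \<Rightarrow> real \<Rightarrow> real \<Rightarrow> real \<Rightarrow> real" where
  "small_error_const \<epsilon> M G Q = 16 * Q^2 * lin_const \<epsilon> M G ^ 2"

definition large_error_const :: "real \<Rightarrow> real \<Rightarrow> real \<Rightarrow> real \<Rightarrow> real" where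
  "large_error_const \<epsilon> M G Q = 4 * (16 * G^2 * Q * deriv_bound (2/\<epsilon>) M + 4 * G^2) / (\<epsilon>/20)^2"

definition face_const :: "real \<Rightarrow> real \<Rightarrow> real \<Rightarrow> real \<Rightarrow> real" where
  "face_const \<epsilon> M G Q = small_error_const \<epsilon> M G Q + large_error_const \<epsilon> M G Q"

lemma face_const_pos:
  assumes "0 < \<epsilon>" "0 \<le> M" "0 < G" "0 \<le> Q"
  shows "0 < face_const \<epsilon> M G Q"
proof -
  have "0 \<le> deriv_bound (2/\<epsilon>) M" unfolding deriv_bound_def using assms by simp
  then have "0 < large_error_const \<epsilon> M G Q"
    unfolding large_error_const_def using assms by (simp add: add_nonneg_pos)
  then show ?thesis unfolding face_const_def small_error_const_def by (simp add: add_nonneg_pos)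
qed

text \<open>
  \<open>x, y, X, Y, q\<close> stand for \<open>rc1, rc0, r1, r0, rh\<close> at the two cells (indices 1 and 2) adjacent
  to a face; \<open>M\<close> bounds the time increments and \<open>G\<close> the jumps across the face, both per unit \<open>h\<close>.
\<close>

locale adjacent_cells =
  fixes \<epsilon> M G Q h :: real and x1 x2 y1 y2 X1 X2 Y1 Y2 q1 q2 :: real
  assumes eps: "0 < \<epsilon>" and h: "0 < h" "h \<le> 1" "G * h \<le> \<epsilon> / 40"
    and x: "\<epsilon> \<le> x1" "\<epsilon> \<le> x2" and X: "\<epsilon> / 2 \<le> X1" "\<epsilon> / 2 \<le> X2"
    and step: "\<bar>x1 - y1\<bar> \<le> M * h" "\<bar>x2 - y2\<bar> \<le> M * h" "\<bar>X1 - Y1\<bar> \<le> M * h" "\<bar>X2 - Y2\<bar> \<le> M * h"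
    and jump: "\<bar>x2 - x1\<bar> \<le> G * h" "\<bar>y2 - y1\<bar> \<le> G * h" "\<bar>X2 - X1\<bar> \<le> G * h" "\<bar>Y2 - Y1\<bar> \<le> G * h"
    and q: "3 * X1 \<le> 4 * q1" "3 * X2 \<le> 4 * q2" "q1 \<le> Q" "q2 \<le> Q"
begin

definition "S_jump = (S_pt x2 y2 - S_pt X2 Y2) - (S_pt x1 y1 - S_pt X1 Y1)"
definition "sigma_jump = ((x2 - X2) + (y2 - Y2)) - ((x1 - X1) + (y1 - Y1))"
definition "err_sum = \<bar>x1 - X1\<bar> + \<bar>x2 - X2\<bar> + \<bar>y1 - Y1\<bar> + \<bar>y2 - Y2\<bar>"
definition "err_sq = (x1 - X1)^2 + (y1 - Y1)^2 + (x2 - X2)^2 + (y2 - Y2)^2"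

lemma M_nonneg: "0 \<le> M"
proof -
  have "0 \<le> M * h" using step(1) by (meson abs_ge_zero order_trans)
  then show ?thesis using h(1) by (simp add: zero_le_mult_iff)
qed

lemma G_nonneg: "0 \<le> G"
proof -
  have "0 \<le> G * h" using jump(1) by (meson abs_ge_zero order_trans)
  then show ?thesis using h(1) by (simp add: zero_le_mult_iff)
qed

lemma Mh_le_M: "M * h \<le> M"
  using M_nonneg h(2) by (simp add: mult_left_le)

lemma inverse_le: "\<epsilon> / 2 \<le> t \<Longrightarrow> 0 < t \<and> 1 / t \<le> 2 / \<epsilon>"
  using eps frac_le[of 1 1 "\<epsilon> / 2" t] by simp

lemma err_sq_bound: "err_sum^2 \<le> 4 * err_sq"
  unfolding err_sum_def err_sq_def using sum_abs_sq_le[of "x1 - X1" "x2 - X2" "y1 - Y1" "y2 - Y2"] by simp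

lemma mean_value_form:
  obtains xx dd XX DD where "\<epsilon> \<le> xx" "\<epsilon> / 2 \<le> XX" "\<bar>dd\<bar> \<le> M * h" "\<bar>DD\<bar> \<le> M * h"
    "\<bar>xx - XX\<bar> \<le> err_sum" "\<bar>dd - DD\<bar> \<le> err_sum" "XX \<le> X1 + G * h" "XX \<le> X2 + G * h"
    "S_jump = S_dx xx dd * (x2 - x1) + S_dy xx dd * (y2 - y1) - S_dx XX DD * (X2 - X1) - S_dy XX DD * (Y2 - Y1)"
proof -
  obtain \<xi> where \<xi>: "0 \<le> \<xi>" "\<xi> \<le> 1" and eq:
    "S_jump = S_dx (x1 + \<xi> * (x2 - x1)) (x1 + \<xi> * (x2 - x1) - (y1 + \<xi> * (y2 - y1))) * (x2 - x1)
     + S_dy (x1 + \<xi> * (x2 - x1)) (x1 + \<xi> * (x2 - x1) - (y1 + \<xi> * (y2 - y1))) * (y2 - y1)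
     - S_dx (X1 + \<xi> * (X2 - X1)) (X1 + \<xi> * (X2 - X1) - (Y1 + \<xi> * (Y2 - Y1))) * (X2 - X1)
     - S_dy (X1 + \<xi> * (X2 - X1)) (X1 + \<xi> * (X2 - X1) - (Y1 + \<xi> * (Y2 - Y1))) * (Y2 - Y1)"
    using S_pt_increment_mean_value[of x1 x2 X1 X2 y2 Y2 y1 Y1] eps x X unfolding S_jump_def by auto
  note interp = interpolation_le_max[OF \<xi>] and abs_interp = abs_interpolation_le[OF \<xi>]
  show thesis
  proof (rule that[OF _ _ _ _ _ _ _ _ eq])
    show "\<epsilon> \<le> x1 + \<xi> * (x2 - x1)" "\<epsilon> / 2 \<le> X1 + \<xi> * (X2 - X1)"
      using interp(1)[of x1 x2] interp(1)[of X1 X2] x X by auto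
    show "X1 + \<xi> * (X2 - X1) \<le> X1 + G * h" "X1 + \<xi> * (X2 - X1) \<le> X2 + G * h"
      using interp(2)[of X1 X2] jump(3) by (auto simp: abs_le_iff)
    show "\<bar>x1 + \<xi> * (x2 - x1) - (y1 + \<xi> * (y2 - y1))\<bar> \<le> M * h"
      using abs_interp[OF step(1,2)] by (simp add: algebra_simps)
    show "\<bar>X1 + \<xi> * (X2 - X1) - (Y1 + \<xi> * (Y2 - Y1))\<bar> \<le> M * h"
      using abs_interp[OF step(3,4)] by (simp add: algebra_simps)
    have "\<bar>x1 - X1\<bar> \<le> err_sum" "\<bar>x2 - X2\<bar> \<le> err_sum" unfolding err_sum_def by simp_all
    from abs_interp[OF this] show "\<bar>x1 + \<xi> * (x2 - x1) - (X1 + \<xi> * (X2 - X1))\<bar> \<le> err_sum"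
      by (simp add: algebra_simps)
    have "\<bar>(x1 - y1) - (X1 - Y1)\<bar> \<le> err_sum" "\<bar>(x2 - y2) - (X2 - Y2)\<bar> \<le> err_sum"
      unfolding err_sum_def by (simp_all add: abs_le_iff, linarith+)
    from abs_interp[OF this]
    show "\<bar>x1 + \<xi> * (x2 - x1) - (y1 + \<xi> * (y2 - y1)) - (X1 + \<xi> * (X2 - X1) - (Y1 + \<xi> * (Y2 - Y1)))\<bar> \<le> err_sum"
      by (simp add: algebra_simps)
  qed
qed

lemma S_jump_linearization:
  obtains xx where "\<epsilon> \<le> xx" "xx \<le> X1 + G * h + err_sum" "xx \<le> X2 + G * h + err_sum"
    "\<bar>S_jump - sigma_jump / (2 * xx)\<bar> \<le> lin_const \<epsilon> M G * h * err_sum"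
proof -
  obtain xx dd XX DD where xx: "\<epsilon> \<le> xx" and XX: "\<epsilon> / 2 \<le> XX"
    and dd: "\<bar>dd\<bar> \<le> M * h" "\<bar>DD\<bar> \<le> M * h" and close: "\<bar>xx - XX\<bar> \<le> err_sum" "\<bar>dd - DD\<bar> \<le> err_sum"
    and XX_le: "XX \<le> X1 + G * h" "XX \<le> X2 + G * h"
    and S_jump: "S_jump = S_dx xx dd * (x2 - x1) + S_dy xx dd * (y2 - y1) - S_dx XX DD * (X2 - X1) - S_dy XX DD * (Y2 - Y1)"
    by (rule mean_value_form)
  define a where "a = M * h * ((2/\<epsilon>)^2 + M * (2/\<epsilon>)^3)"
  define L where "L = deriv_lip (2/\<epsilon>) M"
  have inv: "0 < xx" "1/xx \<le> 2/\<epsilon>" "0 < XX" "1/XX \<le> 2/\<epsilon>"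
    using inverse_le[of xx] inverse_le[OF XX] xx eps by auto
  have dd_M: "\<bar>dd\<bar> \<le> M" "\<bar>DD\<bar> \<le> M" using dd Mh_le_M by linarith+
  have "\<bar>dd\<bar> * ((2/\<epsilon>)^2 + M * (2/\<epsilon>)^3) \<le> a"
    unfolding a_def using dd(1) eps M_nonneg by (intro mult_right_mono) auto
  then have a: "\<bar>S_dx xx dd - 1/(2*xx)\<bar> \<le> a" "\<bar>S_dy xx dd - 1/(2*xx)\<bar> \<le> a"
    using S_dx_S_dy_bounds(3,4)[OF inv(1,2) dd_M(1)] by linarith+
  have L: "\<bar>S_dx xx dd - S_dx XX DD\<bar> \<le> L * err_sum" "\<bar>S_dy xx dd - S_dy XX DD\<bar> \<le> L * err_sum"
    using S_dx_S_dy_lipschitz[OF inv(1,3,2,4) dd_M close] unfolding L_def by simp_all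
  have err_parts: "\<bar>(x2 - X2) - (x1 - X1)\<bar> \<le> err_sum" "\<bar>(y2 - Y2) - (y1 - Y1)\<bar> \<le> err_sum"
    unfolding err_sum_def by linarith+
  define k where "k = 1 / (2 * xx)"
  have "S_jump - sigma_jump / (2 * xx) = (S_dx xx dd - k) * ((x2 - X2) - (x1 - X1))
      + (S_dy xx dd - k) * ((y2 - Y2) - (y1 - Y1))
      + (S_dx xx dd - S_dx XX DD) * (X2 - X1) + (S_dy xx dd - S_dy XX DD) * (Y2 - Y1)"
  proof -
    have "sigma_jump / (2 * xx) = k * sigma_jump" by (simp add: k_def)
    then show ?thesis unfolding S_jump sigma_jump_def by (simp add: algebra_simps)
  qed
  also have "\<bar>\<dots>\<bar> \<le> a * err_sum + a * err_sum + (L * err_sum) * (G * h) + (L * err_sum) * (G * h)"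
  proof -
    have sum4: "\<bar>a1 + a2 + a3 + a4\<bar> \<le> b1 + b2 + b3 + b4"
      if "\<bar>a1\<bar> \<le> b1" "\<bar>a2\<bar> \<le> b2" "\<bar>a3\<bar> \<le> b3" "\<bar>a4\<bar> \<le> b4" for a1 a2 a3 a4 b1 b2 b3 b4 :: real
      using that by (simp only: abs_le_iff) linarith
    show ?thesis
      unfolding k_def
      by (intro sum4 abs_mult_le_mult a L err_parts jump(3,4))
  qed
  also have "\<dots> = lin_const \<epsilon> M G * h * err_sum"
    unfolding lin_const_def a_def L_def by (simp add: algebra_simps)
  finally show thesis using that xx XX_le close(1) by (simp add: abs_le_iff)
qed

lemma sigma_jump_bound: "\<bar>sigma_jump\<bar> \<le> 4 * G * h"
  using jump unfolding sigma_jump_def abs_le_iff by linarith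

lemma S_jump_bound: "\<bar>S_jump\<bar> \<le> 4 * deriv_bound (2/\<epsilon>) M * G * h"
proof -
  obtain xx dd XX DD where xx: "\<epsilon> \<le> xx" and XX: "\<epsilon> / 2 \<le> XX"
    and dd: "\<bar>dd\<bar> \<le> M * h" "\<bar>DD\<bar> \<le> M * h"
    and S_jump: "S_jump = S_dx xx dd * (x2 - x1) + S_dy xx dd * (y2 - y1) - S_dx XX DD * (X2 - X1) - S_dy XX DD * (Y2 - Y1)"
    by (rule mean_value_form)
  define B where "B = deriv_bound (2/\<epsilon>) M"
  have inv: "0 < xx" "1/xx \<le> 2/\<epsilon>" "0 < XX" "1/XX \<le> 2/\<epsilon>"
    using inverse_le[of xx] inverse_le[OF XX] xx eps by auto
  have dd_M: "\<bar>dd\<bar> \<le> M" "\<bar>DD\<bar> \<le> M" using dd Mh_le_M by linarith+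
  have B: "\<bar>S_dx xx dd\<bar> \<le> B" "\<bar>S_dy xx dd\<bar> \<le> B" "\<bar>S_dx XX DD\<bar> \<le> B" "\<bar>S_dy XX DD\<bar> \<le> B"
    using S_dx_S_dy_bounds(1,2)[OF inv(1,2) dd_M(1)] S_dx_S_dy_bounds(1,2)[OF inv(3,4) dd_M(2)]
    unfolding B_def by simp_all
  have "\<bar>S_jump\<bar> \<le> B * (G * h) + B * (G * h) + B * (G * h) + B * (G * h)"
    using abs_mult_le_mult[OF B(1) jump(1)] abs_mult_le_mult[OF B(2) jump(2)]
      abs_mult_le_mult[OF B(3) jump(3)] abs_mult_le_mult[OF B(4) jump(4)]
    unfolding S_jump abs_le_iff by linarith
  then show ?thesis unfolding B_def by (simp add: algebra_simps)
qed

lemma q_avg_nonneg: "0 \<le> (q1 + q2) / 2"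
  using q X eps by (simp add: field_simps)

lemma q_avg_le: "(q1 + q2) / 2 \<le> Q"
  using q by (simp add: field_simps)

lemma small_error_estimate:
  assumes small: "err_sum < \<epsilon> / 20"
  shows "- (small_error_const \<epsilon> M G Q * h^2 * err_sq) \<le> (q1 + q2) / 2 * S_jump * sigma_jump - sigma_jump^2 / 4"
proof -
  obtain xx where xx: "\<epsilon> \<le> xx" "xx \<le> X1 + G * h + err_sum" "xx \<le> X2 + G * h + err_sum"
    and R: "\<bar>S_jump - sigma_jump / (2 * xx)\<bar> \<le> lin_const \<epsilon> M G * h * err_sum"
    by (rule S_jump_linearization)
  define \<rho> where "\<rho> = (q1 + q2) / 2"
  define w where "w = Q * (lin_const \<epsilon> M G * h * err_sum)"
  have xx0: "0 < xx" using xx eps by linarith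
  \<comment> \<open>\<open>8 \<rho> \<ge> 3 (X1 + X2) \<ge> 6 (xx - G h - err_sum)\<close> and \<open>xx \<ge> \<epsilon>\<close>\<close>
  have "8 * \<rho> = 4 * q1 + 4 * q2" by (simp add: \<rho>_def)
  then have "5 * xx \<le> 8 * \<rho>" using q xx small h(3) eps by linarith
  then have ratio: "1/16 \<le> \<rho> / (2 * xx) - 1/4" using xx0 by (simp add: field_simps)
  have "\<bar>\<rho> * (S_jump - sigma_jump / (2 * xx))\<bar> \<le> w"
    unfolding w_def abs_mult using q_avg_nonneg q_avg_le R unfolding \<rho>_def by (intro mult_mono) auto
  from quadratic_lower_bound[OF ratio this, of sigma_jump]
  have "- 4 * w^2 \<le> (\<rho> / (2 * xx) - 1/4) * sigma_jump^2 + \<rho> * (S_jump - sigma_jump / (2 * xx)) * sigma_jump" .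
  also have "\<dots> = \<rho> * S_jump * sigma_jump - sigma_jump^2 / 4"
    using xx0 by (simp add: field_simps power2_eq_square)
  finally have "- 4 * w^2 \<le> \<rho> * S_jump * sigma_jump - sigma_jump^2 / 4" .
  moreover have "4 * w^2 \<le> small_error_const \<epsilon> M G Q * h^2 * err_sq"
    using mult_left_mono[OF err_sq_bound, of "4 * Q^2 * lin_const \<epsilon> M G ^ 2 * h^2"]
    unfolding w_def small_error_const_def by (simp add: algebra_simps)
  ultimately show ?thesis unfolding \<rho>_def by linarith
qed

lemma large_error_estimate:
  assumes large: "\<epsilon> / 20 \<le> err_sum"
  shows "- (large_error_const \<epsilon> M G Q * h^2 * err_sq)
    \<le> (q1 + q2) / 2 * S_jump * sigma_jump - sigma_jump^2 / 4"
proof -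
  define B where "B = deriv_bound (2/\<epsilon>) M"
  define K where "K = 16 * G^2 * Q * B + 4 * G^2"
  have B0: "0 \<le> B" unfolding B_def deriv_bound_def using eps M_nonneg by simp
  have Q0: "0 \<le> Q" using q_avg_nonneg q_avg_le by linarith
  have K0: "0 \<le> K" unfolding K_def using B0 Q0 by simp
  have "\<bar>(q1 + q2) / 2 * S_jump * sigma_jump\<bar> \<le> Q * (4 * B * G * h) * (4 * G * h)"
    unfolding abs_mult using q_avg_nonneg q_avg_le S_jump_bound[folded B_def] sigma_jump_bound Q0 B0 G_nonneg h(1)
    by (intro mult_mono) auto
  moreover have "sigma_jump^2 \<le> (4 * G * h)^2"
    using power_mono[OF sigma_jump_bound abs_ge_zero, of 2] by simp
  moreover have "Q * (4 * B * G * h) * (4 * G * h) + (4 * G * h)^2 / 4 = K * h^2"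
    unfolding K_def by (simp add: algebra_simps power2_eq_square)
  ultimately have lower: "- (K * h^2) \<le> (q1 + q2) / 2 * S_jump * sigma_jump - sigma_jump^2 / 4"
    unfolding abs_le_iff by linarith
  have "(\<epsilon>/20)^2 \<le> err_sum^2" using power_mono[OF large, of 2] eps by simp
  then have "(\<epsilon>/20)^2 \<le> 4 * err_sq" using err_sq_bound by linarith
  then have "K * h^2 * (\<epsilon>/20)^2 \<le> K * h^2 * (4 * err_sq)" using K0 by (simp add: mult_left_mono)
  then have "K * h^2 \<le> 4 * K / (\<epsilon>/20)^2 * h^2 * err_sq" using eps by (simp add: field_simps)
  with lower show ?thesis
    unfolding large_error_const_def B_def[symmetric] K_def[symmetric] by linarith
qed

lemma face_estimate:
  "- (face_const \<epsilon> M G Q * h^2 * err_sq) \<le> (q1 + q2) / 2 * S_jump * sigma_jump - sigma_jump^2 / 4"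
proof -
  have "0 \<le> small_error_const \<epsilon> M G Q" unfolding small_error_const_def by simp
  moreover have "0 \<le> large_error_const \<epsilon> M G Q"
    unfolding large_error_const_def deriv_bound_def using eps M_nonneg q_avg_nonneg q_avg_le by simp
  moreover have "0 \<le> h^2 * err_sq" unfolding err_sq_def by simp
  ultimately have "small_error_const \<epsilon> M G Q * h^2 * err_sq \<le> face_const \<epsilon> M G Q * h^2 * err_sq"
    "large_error_const \<epsilon> M G Q * h^2 * err_sq \<le> face_const \<epsilon> M G Q * h^2 * err_sq"
    unfolding face_const_def mult.assoc[of _ "h^2"] by (simp_all add: mult_right_mono)
  moreover have "err_sum < \<epsilon> / 20 \<or> \<epsilon> / 20 \<le> err_sum" by linarith
  ultimately show ?thesis using small_error_estimate large_error_estimate by fastforce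
qed

lemma face_estimate_scaled:
  "- (face_const \<epsilon> M G Q * err_sq) \<le> (q1 + q2) / 2 * (S_jump / h) * (sigma_jump / h) - (sigma_jump / h)^2 / 4"
proof -
  have "- (face_const \<epsilon> M G Q * err_sq) = - (face_const \<epsilon> M G Q * h^2 * err_sq) / h^2"
    using h(1) by simp
  also have "\<dots> \<le> ((q1 + q2) / 2 * S_jump * sigma_jump - sigma_jump^2 / 4) / h^2"
    using face_estimate by (rule divide_right_mono) simp
  also have "\<dots> = (q1 + q2) / 2 * (S_jump / h) * (sigma_jump / h) - (sigma_jump / h)^2 / 4"
    using h(1) by (simp add: field_simps power2_eq_square)
  finally show ?thesis .
qed

end

section \<open>Sums over cells and faces\<close>

definition cell_sum :: "nat \<Rightarrow> grid \<Rightarrow> real" where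
  "cell_sum N f = (\<Sum>i\<in>{1..N}. \<Sum>j\<in>{1..N}. \<Sum>k\<in>{1..N}. f i j k)"

definition face_sum :: "nat \<Rightarrow> grid \<Rightarrow> grid \<Rightarrow> grid \<Rightarrow> real" where
  "face_sum N Px Py Pz = cell_sum N (\<lambda>i j k.
     (Px i j k + Px (i - 1) j k) / 2 + (Py i j k + Py i (j - 1) k) / 2 + (Pz i j k + Pz i j (k - 1)) / 2)"

lemma cell_sum_mono: "on_cells N (\<lambda>i j k. f i j k \<le> g i j k) \<Longrightarrow> cell_sum N f \<le> cell_sum N g"
  unfolding cell_sum_def on_cells_def by (intro sum_mono) auto

lemma cell_sum_cong: "on_cells N (\<lambda>i j k. f i j k = g i j k) \<Longrightarrow> cell_sum N f = cell_sum N g"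
  unfolding cell_sum_def on_cells_def by (intro sum.cong) auto

lemma cell_sum_add: "cell_sum N (\<lambda>i j k. f i j k + g i j k) = cell_sum N f + cell_sum N g"
  unfolding cell_sum_def by (simp add: sum.distrib)

lemma cell_sum_scale: "cell_sum N (\<lambda>i j k. c * f i j k) = c * cell_sum N f"
  unfolding cell_sum_def by (simp add: sum_distrib_left)

lemma cell_sum_diff: "cell_sum N (\<lambda>i j k. f i j k - c * g i j k) = cell_sum N f - c * cell_sum N g"
  unfolding cell_sum_def by (simp add: sum_subtractf sum_distrib_left)

lemma brk_eq_face_sum:
  "brk h N (Fx, Fy, Fz) (Gx, Gy, Gz) = h^3 * face_sum N (\<lambda>i j k. Fx i j k * Gx i j k)
     (\<lambda>i j k. Fy i j k * Gy i j k) (\<lambda>i j k. Fz i j k * Gz i j k)"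
  by (simp add: brk_def ip_def face_sum_def cell_sum_def)

lemma face_sum_diff:
  "face_sum N Px Py Pz - c * face_sum N Px' Py' Pz' = face_sum N (\<lambda>i j k. Px i j k - c * Px' i j k)
     (\<lambda>i j k. Py i j k - c * Py' i j k) (\<lambda>i j k. Pz i j k - c * Pz' i j k)"
  unfolding face_sum_def cell_sum_diff[symmetric]
  by (rule cell_sum_cong) (simp add: on_cells_def field_simps)

lemma l2sq_eq_cell_sum: "l2sq h N f = h^3 * cell_sum N (\<lambda>i j k. (f i j k)^2)"
  by (simp add: l2sq_def ip_def cell_sum_def power2_eq_square)

lemma cl_in_cells: "1 \<le> N \<Longrightarrow> cl N i \<in> {1..N}"
  unfolding cl_def by auto

lemma cl_id: "i \<in> {1..N} \<Longrightarrow> cl N i = i"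
  unfolding cl_def by auto

lemma on_cells_ext: "on_cells N P \<Longrightarrow> 1 \<le> N \<Longrightarrow> P (cl N i) (cl N j) (cl N k)"
  unfolding on_cells_def using cl_in_cells by blast

lemma sum_clamped_shift_le:
  fixes g :: "nat \<Rightarrow> real"
  assumes N: "1 \<le> N" and g: "\<And>i. i \<in> {1..N} \<Longrightarrow> 0 \<le> g i"
  shows "(\<Sum>i\<in>{1..N}. g (cl N (Suc i))) \<le> 2 * (\<Sum>i\<in>{1..N}. g i)"
    "(\<Sum>i\<in>{1..N}. g (cl N (i - 1))) \<le> 2 * (\<Sum>i\<in>{1..N}. g i)"
proof -
  have "(\<Sum>i\<in>{1..N}. g (cl N (Suc i))) = g N + (\<Sum>i\<in>{1..<N}. g (Suc i))"
  proof -
    have "{1..N} = insert N {1..<N}" using N by auto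
    moreover have "cl N (Suc N) = N" "\<And>i. i \<in> {1..<N} \<Longrightarrow> cl N (Suc i) = Suc i"
      using N unfolding cl_def by auto
    ultimately show ?thesis by simp
  qed
  also have "(\<Sum>i\<in>{1..<N}. g (Suc i)) = (\<Sum>i\<in>Suc ` {1..<N}. g i)"
    by (subst sum.reindex) (auto simp only: comp_def inj_Suc inj_on_def)
  also have "\<dots> \<le> (\<Sum>i\<in>{1..N}. g i)" using g by (intro sum_mono2) auto
  finally show "(\<Sum>i\<in>{1..N}. g (cl N (Suc i))) \<le> 2 * (\<Sum>i\<in>{1..N}. g i)"
    using member_le_sum[of N "{1..N}" g] g N by simp
  have "(\<Sum>i\<in>{1..N}. g (cl N (i - 1))) = g 1 + (\<Sum>i\<in>{2..N}. g (i - 1))"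
  proof -
    have "{1..N} = insert 1 {2..N}" using N by auto
    moreover have "cl N 0 = 1" "\<And>i. i \<in> {2..N} \<Longrightarrow> cl N (i - 1) = i - 1"
      using N unfolding cl_def by auto
    ultimately show ?thesis by simp
  qed
  also have "(\<Sum>i\<in>{2..N}. g (i - 1)) = (\<Sum>i\<in>(\<lambda>i. i - 1) ` {2..N}. g i)"
    by (subst sum.reindex) (auto simp: inj_on_def)
  also have "\<dots> \<le> (\<Sum>i\<in>{1..N}. g i)" using g by (intro sum_mono2) auto
  finally show "(\<Sum>i\<in>{1..N}. g (cl N (i - 1))) \<le> 2 * (\<Sum>i\<in>{1..N}. g i)"
    using member_le_sum[of 1 "{1..N}" g] g N by simp
qed

lemma cell_sum_reindex_le:
  assumes \<sigma>: "\<And>g :: nat \<Rightarrow> real. (\<And>i. i \<in> {1..N} \<Longrightarrow> 0 \<le> g i) \<Longrightarrow>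
      (\<Sum>i\<in>{1..N}. g (\<sigma> i)) \<le> 2 * (\<Sum>i\<in>{1..N}. g i)"
    and Q: "on_cells N (\<lambda>i j k. 0 \<le> Q i j k)"
  shows "cell_sum N (\<lambda>i j k. Q (\<sigma> i) j k) \<le> 2 * cell_sum N Q"
    "cell_sum N (\<lambda>i j k. Q i (\<sigma> j) k) \<le> 2 * cell_sum N Q"
    "cell_sum N (\<lambda>i j k. Q i j (\<sigma> k)) \<le> 2 * cell_sum N Q"
proof -
  have Q': "\<And>i j k. i \<in> {1..N} \<Longrightarrow> j \<in> {1..N} \<Longrightarrow> k \<in> {1..N} \<Longrightarrow> 0 \<le> Q i j k"
    using Q unfolding on_cells_def by blast
  show "cell_sum N (\<lambda>i j k. Q (\<sigma> i) j k) \<le> 2 * cell_sum N Q"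
    unfolding cell_sum_def using Q' by (intro \<sigma>) (auto intro!: sum_nonneg)
  have "(\<Sum>i\<in>{1..N}. \<Sum>j\<in>{1..N}. \<Sum>k\<in>{1..N}. Q i (\<sigma> j) k)
      \<le> (\<Sum>i\<in>{1..N}. 2 * (\<Sum>j\<in>{1..N}. \<Sum>k\<in>{1..N}. Q i j k))"
    using Q' by (intro sum_mono \<sigma>) (auto intro!: sum_nonneg)
  then show "cell_sum N (\<lambda>i j k. Q i (\<sigma> j) k) \<le> 2 * cell_sum N Q"
    unfolding cell_sum_def by (simp add: sum_distrib_left)
  have "(\<Sum>i\<in>{1..N}. \<Sum>j\<in>{1..N}. \<Sum>k\<in>{1..N}. Q i j (\<sigma> k))
      \<le> (\<Sum>i\<in>{1..N}. \<Sum>j\<in>{1..N}. 2 * (\<Sum>k\<in>{1..N}. Q i j k))"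
    using Q' by (intro sum_mono \<sigma>) auto
  then show "cell_sum N (\<lambda>i j k. Q i j (\<sigma> k)) \<le> 2 * cell_sum N Q"
    unfolding cell_sum_def by (simp add: sum_distrib_left)
qed

lemma cell_sum_neighbour_le:
  assumes N: "1 \<le> N" and Q: "on_cells N (\<lambda>i j k. 0 \<le> Q i j k)"
  shows "cell_sum N (\<lambda>i j k. ext N Q (Suc i) j k) \<le> 2 * cell_sum N Q"
    "cell_sum N (\<lambda>i j k. ext N Q (i - 1) j k) \<le> 2 * cell_sum N Q"
    "cell_sum N (\<lambda>i j k. ext N Q i (Suc j) k) \<le> 2 * cell_sum N Q"
    "cell_sum N (\<lambda>i j k. ext N Q i (j - 1) k) \<le> 2 * cell_sum N Q"
    "cell_sum N (\<lambda>i j k. ext N Q i j (Suc k)) \<le> 2 * cell_sum N Q"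
    "cell_sum N (\<lambda>i j k. ext N Q i j (k - 1)) \<le> 2 * cell_sum N Q"
proof -
  note up = cell_sum_reindex_le[OF sum_clamped_shift_le(1)[OF N] Q]
  note down = cell_sum_reindex_le[OF sum_clamped_shift_le(2)[OF N] Q]
  have ext_eq: "cell_sum N (\<lambda>i j k. ext N Q (a i) j k) = cell_sum N (\<lambda>i j k. Q (cl N (a i)) j k)"
    "cell_sum N (\<lambda>i j k. ext N Q i (a j) k) = cell_sum N (\<lambda>i j k. Q i (cl N (a j)) k)"
    "cell_sum N (\<lambda>i j k. ext N Q i j (a k)) = cell_sum N (\<lambda>i j k. Q i j (cl N (a k)))" for a
    by (auto intro!: cell_sum_cong simp: on_cells_def ext_def cl_id)
  show "cell_sum N (\<lambda>i j k. ext N Q (Suc i) j k) \<le> 2 * cell_sum N Q"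
    "cell_sum N (\<lambda>i j k. ext N Q (i - 1) j k) \<le> 2 * cell_sum N Q"
    "cell_sum N (\<lambda>i j k. ext N Q i (Suc j) k) \<le> 2 * cell_sum N Q"
    "cell_sum N (\<lambda>i j k. ext N Q i (j - 1) k) \<le> 2 * cell_sum N Q"
    "cell_sum N (\<lambda>i j k. ext N Q i j (Suc k)) \<le> 2 * cell_sum N Q"
    "cell_sum N (\<lambda>i j k. ext N Q i j (k - 1)) \<le> 2 * cell_sum N Q"
    unfolding ext_eq using up down by simp_all
qed

lemma face_sum_lower_bound:
  fixes K :: real
  assumes N: "1 \<le> N" and Q: "on_cells N (\<lambda>i j k. 0 \<le> Q i j k)" and K: "0 \<le> K"
    and Px: "\<And>i j k. i \<le> N \<Longrightarrow> j \<in> {1..N} \<Longrightarrow> k \<in> {1..N} \<Longrightarrow>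
      - (K * (ext N Q i j k + ext N Q (Suc i) j k)) \<le> Px i j k"
    and Py: "\<And>i j k. i \<in> {1..N} \<Longrightarrow> j \<le> N \<Longrightarrow> k \<in> {1..N} \<Longrightarrow>
      - (K * (ext N Q i j k + ext N Q i (Suc j) k)) \<le> Py i j k"
    and Pz: "\<And>i j k. i \<in> {1..N} \<Longrightarrow> j \<in> {1..N} \<Longrightarrow> k \<le> N \<Longrightarrow>
      - (K * (ext N Q i j k + ext N Q i j (Suc k))) \<le> Pz i j k"
  shows "- (9 * K * cell_sum N Q) \<le> face_sum N Px Py Pz"
proof -
  define nb where "nb i j k = ext N Q (Suc i) j k + ext N Q (i - 1) j k + ext N Q i (Suc j) k
    + ext N Q i (j - 1) k + ext N Q i j (Suc k) + ext N Q i j (k - 1)" for i j k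
  have "on_cells N (\<lambda>i j k. - (K / 2) * (6 * Q i j k + nb i j k) \<le>
     (Px i j k + Px (i - 1) j k) / 2 + (Py i j k + Py i (j - 1) k) / 2 + (Pz i j k + Pz i j (k - 1)) / 2)"
    unfolding on_cells_def
  proof (intro ballI)
    fix i j k assume ijk: "i \<in> {1..N}" "j \<in> {1..N}" "k \<in> {1..N}"
    then have "ext N Q i j k = Q i j k" by (simp add: ext_def cl_id)
    moreover have "Suc (i - 1) = i" "Suc (j - 1) = j" "Suc (k - 1) = k" using ijk by auto
    moreover note Px[of i j k] Px[of "i - 1" j k] Py[of i j k] Py[of i "j - 1" k] Pz[of i j k] Pz[of i j "k - 1"]
    ultimately show "- (K / 2) * (6 * Q i j k + nb i j k) \<le>
      (Px i j k + Px (i - 1) j k) / 2 + (Py i j k + Py i (j - 1) k) / 2 + (Pz i j k + Pz i j (k - 1)) / 2"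
      using ijk unfolding nb_def by (simp add: algebra_simps add_divide_distrib)
  qed
  then have "cell_sum N (\<lambda>i j k. - (K / 2) * (6 * Q i j k + nb i j k)) \<le> face_sum N Px Py Pz"
    unfolding face_sum_def by (rule cell_sum_mono)
  moreover have "cell_sum N (\<lambda>i j k. - (K / 2) * (6 * Q i j k + nb i j k))
      = - (K / 2) * (6 * cell_sum N Q + cell_sum N nb)"
    by (simp only: cell_sum_scale cell_sum_add)
  moreover have "cell_sum N nb \<le> 12 * cell_sum N Q"
    using cell_sum_neighbour_le[OF N Q] unfolding nb_def cell_sum_add by linarith
  ultimately show ?thesis using K mult_left_mono[of "cell_sum N nb" "12 * cell_sum N Q" "K / 2"]
    by (simp add: algebra_simps)
qed

section \<open>The discrete estimate\<close>

lemma grad_sup_le_jumps: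
  assumes G: "grad_sup_le h N f c" and h: "0 < h"
  shows "i \<le> N \<Longrightarrow> j \<in> {1..N} \<Longrightarrow> k \<in> {1..N} \<Longrightarrow> \<bar>ext N f (Suc i) j k - ext N f i j k\<bar> \<le> c * h"
    "i \<in> {1..N} \<Longrightarrow> j \<le> N \<Longrightarrow> k \<in> {1..N} \<Longrightarrow> \<bar>ext N f i (Suc j) k - ext N f i j k\<bar> \<le> c * h"
    "i \<in> {1..N} \<Longrightarrow> j \<in> {1..N} \<Longrightarrow> k \<le> N \<Longrightarrow> \<bar>ext N f i j (Suc k) - ext N f i j k\<bar> \<le> c * h"
proof -
  have scale: "\<bar>a - b\<bar> \<le> c * h" if "\<bar>(a - b) / h\<bar> \<le> c" for a b
    using that h by (simp add: pos_divide_le_eq)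
  have D: "\<bar>Dx h N f i j k\<bar> \<le> c \<and> \<bar>Dy h N f j i k\<bar> \<le> c \<and> \<bar>Dz h N f j k i\<bar> \<le> c"
    if "i \<le> N" "j \<in> {1..N}" "k \<in> {1..N}" for i j k
    using G that unfolding grad_sup_le_def by simp
  show "\<bar>ext N f (Suc i) j k - ext N f i j k\<bar> \<le> c * h" if "i \<le> N" "j \<in> {1..N}" "k \<in> {1..N}"
    using D[OF that] unfolding Dx_def by (blast intro: scale)
  show "\<bar>ext N f i (Suc j) k - ext N f i j k\<bar> \<le> c * h" if "i \<in> {1..N}" "j \<le> N" "k \<in> {1..N}"
    using D[OF that(2,1,3)] unfolding Dy_def by (blast intro: scale)
  show "\<bar>ext N f i j (Suc k) - ext N f i j k\<bar> \<le> c * h" if "i \<in> {1..N}" "j \<in> {1..N}" "k \<le> N"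
    using D[OF that(3,1,2)] unfolding Dz_def by (blast intro: scale)
qed

locale scheme_step =
  fixes \<epsilon> C lam h dt :: real and N :: nat and rc0 rc1 r0 r1 rh :: grid
  assumes eps: "0 < \<epsilon>" and C: "0 < C" and lam: "0 < lam"
    and h: "0 < h" "h \<le> 1" "h \<le> \<epsilon> / (40 * (C + 1))" and dt: "dt \<le> lam * h" and N: "1 \<le> N"
    and rc1_lower: "on_cells N (\<lambda>i j k. \<epsilon> \<le> rc1 i j k)"
    and r1_lower: "on_cells N (\<lambda>i j k. \<epsilon> / 2 \<le> r1 i j k)"
    and rh_upper: "on_cells N (\<lambda>i j k. rh i j k \<le> C + \<epsilon> / 2)"
    and rh_ratio: "on_cells N (\<lambda>i j k. 3 / 4 \<le> rh i j k / r1 i j k)"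
    and rc_step: "sup_le N (\<lambda>i j k. rc1 i j k - rc0 i j k) (C * dt)"
    and r_step: "sup_le N (\<lambda>i j k. r1 i j k - r0 i j k) ((C + 1) * dt)"
    and grad: "grad_sup_le h N rc1 C" "grad_sup_le h N rc0 C"
      "grad_sup_le h N r1 (C + 1)" "grad_sup_le h N r0 (C + 1)"
begin

abbreviation "S_diff \<equiv> \<lambda>i j k. Sfun rc1 rc0 i j k - Sfun r1 r0 i j k"
abbreviation "sigma \<equiv> \<lambda>i j k. (rc1 i j k - r1 i j k) + (rc0 i j k - r0 i j k)"
abbreviation "sq_err \<equiv> \<lambda>i j k. (rc1 i j k - r1 i j k)^2 + (rc0 i j k - r0 i j k)^2"
abbreviation "K_face \<equiv> face_const \<epsilon> ((C + 1) * lam) (C + 1) (C + \<epsilon> / 2)"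

lemma K_nonneg: "0 \<le> K_face"
  using face_const_pos[of \<epsilon> "(C + 1) * lam" "C + 1" "C + \<epsilon> / 2"] eps C lam by simp

lemma adjacent_cells_at:
  assumes "\<bar>ext N rc1 a' b' c' - ext N rc1 a b c\<bar> \<le> C * h" "\<bar>ext N rc0 a' b' c' - ext N rc0 a b c\<bar> \<le> C * h"
    "\<bar>ext N r1 a' b' c' - ext N r1 a b c\<bar> \<le> (C + 1) * h" "\<bar>ext N r0 a' b' c' - ext N r0 a b c\<bar> \<le> (C + 1) * h"
  shows "adjacent_cells \<epsilon> ((C + 1) * lam) (C + 1) (C + \<epsilon> / 2) h
    (ext N rc1 a b c) (ext N rc1 a' b' c') (ext N rc0 a b c) (ext N rc0 a' b' c')
    (ext N r1 a b c) (ext N r1 a' b' c') (ext N r0 a b c) (ext N r0 a' b' c')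
    (ext N rh a b c) (ext N rh a' b' c')"
proof -
  have pt: "\<epsilon> \<le> ext N rc1 a b c" "\<epsilon> / 2 \<le> ext N r1 a b c"
    "\<bar>ext N rc1 a b c - ext N rc0 a b c\<bar> \<le> C * dt" "\<bar>ext N r1 a b c - ext N r0 a b c\<bar> \<le> (C + 1) * dt"
    "ext N rh a b c \<le> C + \<epsilon> / 2" "3 / 4 \<le> ext N rh a b c / ext N r1 a b c" for a b c
    using on_cells_ext[OF rc1_lower N] on_cells_ext[OF r1_lower N]
      on_cells_ext[OF rc_step[unfolded sup_le_def] N] on_cells_ext[OF r_step[unfolded sup_le_def] N]
      on_cells_ext[OF rh_upper N] on_cells_ext[OF rh_ratio N]
    unfolding ext_def by blast+
  have ratio: "3 * ext N r1 a b c \<le> 4 * ext N rh a b c" for a b c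
    using pt(6)[of a b c] pt(2)[of a b c] eps by (simp add: field_simps)
  have "C * dt \<le> C * (lam * h)" "(C + 1) * dt \<le> (C + 1) * (lam * h)"
    using mult_left_mono[OF dt] C by simp_all
  moreover have "0 < lam * h" using lam h(1) by simp
  ultimately have "C * dt \<le> (C + 1) * lam * h" "(C + 1) * dt \<le> (C + 1) * lam * h"
    by (simp_all add: algebra_simps)
  then have step: "\<bar>ext N rc1 a b c - ext N rc0 a b c\<bar> \<le> (C + 1) * lam * h"
    "\<bar>ext N r1 a b c - ext N r0 a b c\<bar> \<le> (C + 1) * lam * h" for a b c
    using pt(3,4) by (meson order_trans)+
  have "C * h \<le> (C + 1) * h" using h(1) by simp
  then have "\<bar>ext N rc1 a' b' c' - ext N rc1 a b c\<bar> \<le> (C + 1) * h"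
    "\<bar>ext N rc0 a' b' c' - ext N rc0 a b c\<bar> \<le> (C + 1) * h"
    using assms(1,2) by linarith+
  moreover have "(C + 1) * h \<le> \<epsilon> / 40" using h(3) C by (simp add: field_simps)
  ultimately show ?thesis
    using assms(3,4) pt(1,2,5) ratio step eps h(1,2) by unfold_locales auto
qed

lemma face_estimate_at:
  assumes "\<bar>ext N rc1 a' b' c' - ext N rc1 a b c\<bar> \<le> C * h" "\<bar>ext N rc0 a' b' c' - ext N rc0 a b c\<bar> \<le> C * h"
    "\<bar>ext N r1 a' b' c' - ext N r1 a b c\<bar> \<le> (C + 1) * h" "\<bar>ext N r0 a' b' c' - ext N r0 a b c\<bar> \<le> (C + 1) * h"
  shows "- (K_face * (ext N sq_err a b c + ext N sq_err a' b' c')) \<le>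
    (ext N rh a' b' c' + ext N rh a b c) / 2 * ((ext N S_diff a' b' c' - ext N S_diff a b c) / h)
      * ((ext N sigma a' b' c' - ext N sigma a b c) / h)
    - 1/4 * ((ext N sigma a' b' c' - ext N sigma a b c) / h * ((ext N sigma a' b' c' - ext N sigma a b c) / h))"
proof -
  have ext_eqs: "ext N S_diff a b c = S_pt (ext N rc1 a b c) (ext N rc0 a b c) - S_pt (ext N r1 a b c) (ext N r0 a b c)"
    "ext N sigma a b c = (ext N rc1 a b c - ext N r1 a b c) + (ext N rc0 a b c - ext N r0 a b c)"
    "ext N sq_err a b c = (ext N rc1 a b c - ext N r1 a b c)^2 + (ext N rc0 a b c - ext N r0 a b c)^2"
    for a b c
    by (simp_all add: ext_def Sfun_def S_pt_def)
  note fp = adjacent_cells_at[OF assms]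
  show ?thesis
    using adjacent_cells.face_estimate_scaled[OF fp,
        unfolded adjacent_cells.S_jump_def[OF fp] adjacent_cells.sigma_jump_def[OF fp] adjacent_cells.err_sq_def[OF fp]]
    unfolding ext_eqs by (simp add: ac_simps power2_eq_square)
qed

lemma face_estimates:
  "\<And>i j k. i \<le> N \<Longrightarrow> j \<in> {1..N} \<Longrightarrow> k \<in> {1..N} \<Longrightarrow>
    - (K_face * (ext N sq_err i j k + ext N sq_err (Suc i) j k)) \<le>
    Ax N rh i j k * Dx h N S_diff i j k * Dx h N sigma i j k - 1/4 * (Dx h N sigma i j k * Dx h N sigma i j k)"
  "\<And>i j k. i \<in> {1..N} \<Longrightarrow> j \<le> N \<Longrightarrow> k \<in> {1..N} \<Longrightarrow>
    - (K_face * (ext N sq_err i j k + ext N sq_err i (Suc j) k)) \<le>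
    Ay N rh i j k * Dy h N S_diff i j k * Dy h N sigma i j k - 1/4 * (Dy h N sigma i j k * Dy h N sigma i j k)"
  "\<And>i j k. i \<in> {1..N} \<Longrightarrow> j \<in> {1..N} \<Longrightarrow> k \<le> N \<Longrightarrow>
    - (K_face * (ext N sq_err i j k + ext N sq_err i j (Suc k))) \<le>
    Az N rh i j k * Dz h N S_diff i j k * Dz h N sigma i j k - 1/4 * (Dz h N sigma i j k * Dz h N sigma i j k)"
  unfolding Ax_def Dx_def Ay_def Dy_def Az_def Dz_def
  by (rule face_estimate_at; use grad_sup_le_jumps[OF grad(1) h(1)] grad_sup_le_jumps[OF grad(2) h(1)]
      grad_sup_le_jumps[OF grad(3) h(1)] grad_sup_le_jumps[OF grad(4) h(1)] in simp)+

lemma gradient_term_lower_bound: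
  "- (9 * K_face * (l2sq h N (\<lambda>i j k. rc1 i j k - r1 i j k) + l2sq h N (\<lambda>i j k. rc0 i j k - r0 i j k)))
    \<le> brk h N (dgrad h N rh S_diff) (grad h N sigma) - gnorm2 h N sigma / 4"
proof -
  have err_sq_nonneg: "on_cells N (\<lambda>i j k. 0 \<le> sq_err i j k)" unfolding on_cells_def by simp
  have scale: "- (9 * K_face * A) \<le> B" if "A = h^3 * S" "B = h^3 * F" "- (9 * K_face * S) \<le> F" for A B S F
    using that mult_left_mono[OF that(3), of "h^3"] h(1) by (simp add: algebra_simps)
  have "l2sq h N (\<lambda>i j k. rc1 i j k - r1 i j k) + l2sq h N (\<lambda>i j k. rc0 i j k - r0 i j k)
      = h^3 * cell_sum N sq_err"
    unfolding l2sq_eq_cell_sum cell_sum_add by (simp add: algebra_simps)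
  moreover have "brk h N (dgrad h N rh S_diff) (grad h N sigma) - gnorm2 h N sigma / 4
      = h^3 * face_sum N
        (\<lambda>i j k. Ax N rh i j k * Dx h N S_diff i j k * Dx h N sigma i j k - 1/4 * (Dx h N sigma i j k * Dx h N sigma i j k))
        (\<lambda>i j k. Ay N rh i j k * Dy h N S_diff i j k * Dy h N sigma i j k - 1/4 * (Dy h N sigma i j k * Dy h N sigma i j k))
        (\<lambda>i j k. Az N rh i j k * Dz h N S_diff i j k * Dz h N sigma i j k - 1/4 * (Dz h N sigma i j k * Dz h N sigma i j k))"
    unfolding gnorm2_def dgrad_def grad_def brk_eq_face_sum face_sum_diff[symmetric]
    by (simp add: algebra_simps)
  moreover have "- (9 * K_face * cell_sum N sq_err) \<le> face_sum N
        (\<lambda>i j k. Ax N rh i j k * Dx h N S_diff i j k * Dx h N sigma i j k - 1/4 * (Dx h N sigma i j k * Dx h N sigma i j k))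
        (\<lambda>i j k. Ay N rh i j k * Dy h N S_diff i j k * Dy h N sigma i j k - 1/4 * (Dy h N sigma i j k * Dy h N sigma i j k))
        (\<lambda>i j k. Az N rh i j k * Dz h N S_diff i j k * Dz h N sigma i j k - 1/4 * (Dz h N sigma i j k * Dz h N sigma i j k))"
    by (rule face_sum_lower_bound[OF N err_sq_nonneg K_nonneg face_estimates])
  ultimately show ?thesis by (rule scale)
qed

end

theorem mainTheorem9:
  fixes \<gamma> \<epsilon> C lam1 lam2 a b :: real
  assumes "\<gamma> > 0" "\<epsilon> > 0" "C > 0" "lam1 > 0" "lam2 > 0" "a < b"
  shows "\<exists>C1>0. \<exists>M1>0. \<exists>h0>0. \<forall>(N::nat) (h::real) (dt::real) (rc0::grid) (rc1::grid)
           (r0::grid) (r1::grid) (rh::grid).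
     N \<ge> 1 \<longrightarrow> h = (b - a) / real N \<longrightarrow> h < h0 \<longrightarrow>
     lam1 * h \<le> dt \<longrightarrow> dt \<le> lam2 * h \<longrightarrow>
     on_cells N (\<lambda>i j k. \<epsilon> \<le> rc0 i j k \<and> rc0 i j k \<le> C) \<longrightarrow>
     on_cells N (\<lambda>i j k. \<epsilon> \<le> rc1 i j k \<and> rc1 i j k \<le> C) \<longrightarrow>
     grad_sup_le h N rc0 C \<longrightarrow> grad_sup_le h N rc1 C \<longrightarrow>
     sup_le N (\<lambda>i j k. rc1 i j k - rc0 i j k) (C * dt) \<longrightarrow>
     grad_sup_le h N (\<lambda>i j k. rc1 i j k - rc0 i j k) (C * dt) \<longrightarrow>
     on_cells N (\<lambda>i j k. \<epsilon> / 2 \<le> r1 i j k \<and> r1 i j k \<le> C + \<epsilon> / 2) \<longrightarrow>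
     on_cells N (\<lambda>i j k. r0 i j k > 0) \<longrightarrow>
     grad_sup_le h N r0 (C + 1) \<longrightarrow> grad_sup_le h N r1 (C + 1) \<longrightarrow>
     sup_le N (\<lambda>i j k. r1 i j k - r0 i j k) ((C + 1) * dt) \<longrightarrow>
     on_cells N (\<lambda>i j k. \<epsilon> / 2 \<le> rh i j k \<and> rh i j k \<le> C + \<epsilon> / 2) \<longrightarrow>
     on_cells N (\<lambda>i j k. 3 / 4 \<le> rh i j k / r1 i j k \<and> rh i j k / r1 i j k \<le> 5 / 4) \<longrightarrow>
     \<gamma> * brk h N (dgrad h N rh (\<lambda>i j k. Sfun rc1 rc0 i j k - Sfun r1 r0 i j k))
                  (grad h N (\<lambda>i j k. (rc1 i j k - r1 i j k) + (rc0 i j k - r0 i j k)))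
       \<ge> \<gamma> / 4 * gnorm2 h N (\<lambda>i j k. (rc1 i j k - r1 i j k) + (rc0 i j k - r0 i j k))
         - C1 * (l2sq h N (\<lambda>i j k. rc1 i j k - r1 i j k) + l2sq h N (\<lambda>i j k. rc0 i j k - r0 i j k))
         - M1 * h ^ 8"
proof -
  define K where "K = face_const \<epsilon> ((C + 1) * lam2) (C + 1) (C + \<epsilon> / 2)"
  define h0 where "h0 = min 1 (\<epsilon> / (40 * (C + 1)))"
  have "0 < K" unfolding K_def using assms by (intro face_const_pos) auto
  then have C1_pos: "0 < 9 * K * \<gamma>" using assms(1) by simp
  have h0_pos: "0 < h0" unfolding h0_def using assms by simp
  show ?thesis
    apply (rule exI[of _ "9 * K * \<gamma>"], rule conjI, fact C1_pos)
    \<comment> \<open>the estimate holds without the \<open>h\<^sup>8\<close> term, so any \<open>M1 > 0\<close> will do\<close>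
    apply (rule exI[of _ "1::real"], rule conjI, simp)
    apply (rule exI[of _ h0], rule conjI, fact h0_pos)
    apply (intro allI impI)
    subgoal premises hyps for N h dt rc0 rc1 r0 r1 rh
    proof -
      have "0 < h" using hyps(1,2) assms(6) by simp
      moreover have "h \<le> 1" "h \<le> \<epsilon> / (40 * (C + 1))" using hyps(3) unfolding h0_def by simp_all
      ultimately interpret scheme_step \<epsilon> C lam2 h dt N rc0 rc1 r0 r1 rh
        using hyps assms by unfold_locales (auto simp: on_cells_def)
      have "\<gamma> * (- (9 * K * L)) \<le> \<gamma> * (B - G / 4)" if "- (9 * K * L) \<le> B - G / 4" for B G L
        by (rule mult_left_mono[OF that]) (use assms(1) in simp)
      moreover have "\<gamma> * (- (9 * K * L)) = - ((9 * K * \<gamma>) * L)" "\<gamma> * (B - G / 4) = \<gamma> * B - \<gamma> / 4 * G"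
        for B G L by (simp_all add: algebra_simps)
      moreover have "0 \<le> h^8" by simp
      ultimately show ?thesis
        using gradient_term_lower_bound unfolding K_def by (smt (verit))
    qed
    done
qed

end
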